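(* Let $F$ be WORDER or WMAJORITY with weights $w_1\ge\dots\ge w_n>0$, and run SMO-GP-single on MO-$F$ starting from a non-redundant initial tree. Then at every iteration every tree in the population is non-redundant, and the population has at most $n+1$ elements.
   Context: Fix an integer $n\ge 1$ and real weights $w_1\ge w_2\ge\dots\ge w_n>0$. The terminal set is $T=\{x_1,\bar x_1,\dots,x_n,\bar x_n\}$ ($\bar x_i$ is the complement of $x_i$; $x_i$ is called positive). A syntax tree is either the empty tree or a rooted ordered binary tree whose inner nodes are all labelled by the binary function $J$ (join, exactly two ordered children) and whose leaves are labelled by elements of $T$. The complexity $C(X)$ is the number of nodes of $X$ (0 for the empty tree). The leaf list $l$ of $X$ is the sequence of leaf labels in an inorder traversal. WORDER: build a list $S$ by scanning $l$ from front to rear and appending a literal only if neither it nor its complement is already in $S$; WORDER$(X)=\sum_{i:\,x_i\in S} w_i$; the expressed variables are the $x_i\in S$. WMAJORITY: WMAJORITY$(X)=\sum w_i$ over all $i$ such that $x_i$ occurs in $l$ at least once and at least as often as $\bar x_i$; these $x_i$ are the expressed variables. A tree is non-redundant if it is empty or if, with $k$ its number of expressed variables, its complexity is $2k-1$. MO-$F(X)=(F(X),C(X))$, $F$ maximized and $C$ minimized. Mutation (one HVL-Prime application): choose uniformly at random one of three operations. Substitute: replace a uniformly random leaf by a uniformly random $u\in T$. Insert: choose a uniformly random node $v$ and uniformly random $u\in T$, replace $v$ by a $J$-node with children $u$ and $v$ in uniformly random order (inserting into the empty tree yields the single leaf $u$). Delete: choose a uniformly random leaf $v$ with parent $p$ and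 sibling $u$, replace $p$ by $u$ (deleting $p$ and $v$; deleting the only leaf of a one-leaf tree yields the empty tree). Dominance: $Y\succeq X$ iff $F(Y)\ge F(X)$ and $C(Y)\le C(X)$; $Y\succ X$ iff $Y\succeq X$ and ($F(Y)>F(X)$ or $C(Y)<C(X)$). SMO-GP-single: choose an initial tree $X$ and set $P:=\{X\}$; repeat: choose $X\in P$ uniformly at random, let $Y$ be $X$ after one HVL-Prime application; if no $Z\in P$ satisfies $Z\succ Y$, set $P:=(P\setminus\{Z\in P: Y\succeq Z\})\cup\{Y\}$. *)

theory Defs
  imports Complex_Main
begin

text \<open>Variables are indexed 1..n; Pos i is x_i, Neg i is its complement.\<close>
datatype lit = Pos nat | Neg nat

fun var :: "lit \<Rightarrow> nat" where
  "var (Pos i) = i" | "var (Neg i) = i"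

definition terminals :: "nat \<Rightarrow> lit set" where
  "terminals n = {Pos i | i. 1 \<le> i \<and> i \<le> n} \<union> {Neg i | i. 1 \<le> i \<and> i \<le> n}"

text \<open>Non-empty syntax trees; a syntax tree is an optional stree (None = empty tree).\<close>
datatype stree = Lf lit | Jn stree stree

type_synonym syntree = "stree option"

fun size_st :: "stree \<Rightarrow> nat" where
  "size_st (Lf a) = 1" | "size_st (Jn l r) = 1 + size_st l + size_st r"

definition complexity :: "syntree \<Rightarrow> nat" where
  "complexity X = (case X of None \<Rightarrow> 0 | Some t \<Rightarrow> size_st t)"

fun leaves_st :: "stree \<Rightarrow> lit list" where
  "leaves_st (Lf a) = [a]" | "leaves_st (Jn l r) = leaves_st l @ leaves_st r"

definition leaves :: "syntree \<Rightarrow> lit list" where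
  "leaves X = (case X of None \<Rightarrow> [] | Some t \<Rightarrow> leaves_st t)"

definition over_T :: "nat \<Rightarrow> syntree \<Rightarrow> bool" where
  "over_T n X \<longleftrightarrow> set (leaves X) \<subseteq> terminals n"

datatype fitness_kind = WORDER | WMAJORITY

fun worder_scan :: "lit list \<Rightarrow> lit list \<Rightarrow> lit list" where
  "worder_scan S [] = S"
| "worder_scan S (x # xs) =
     (if var x \<in> var ` set S then worder_scan S xs else worder_scan (S @ [x]) xs)"

definition expressed :: "fitness_kind \<Rightarrow> syntree \<Rightarrow> nat set" where
  "expressed k X = (case k of
      WORDER \<Rightarrow> {i. Pos i \<in> set (worder_scan [] (leaves X))}
    | WMAJORITY \<Rightarrow> {i. count_list (leaves X) (Pos i) \<ge> 1 \<and>
                       count_list (leaves X) (Pos i) \<ge> count_list (leaves X) (Neg i)})"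

definition fitness :: "fitness_kind \<Rightarrow> (nat \<Rightarrow> real) \<Rightarrow> syntree \<Rightarrow> real" where
  "fitness k w X = (\<Sum>i\<in>expressed k X. w i)"

definition non_redundant :: "fitness_kind \<Rightarrow> syntree \<Rightarrow> bool" where
  "non_redundant k X \<longleftrightarrow>
     X = None \<or> int (complexity X) = 2 * int (card (expressed k X)) - 1"

fun substs :: "lit \<Rightarrow> stree \<Rightarrow> stree set" where
  "substs u (Lf a) = {Lf u}"
| "substs u (Jn l r) = {Jn l' r | l'. l' \<in> substs u l} \<union> {Jn l r' | r'. r' \<in> substs u r}"

fun inserts :: "lit \<Rightarrow> stree \<Rightarrow> stree set" where
  "inserts u (Lf a) = {Jn (Lf u) (Lf a), Jn (Lf a) (Lf u)}"
| "inserts u (Jn l r) = {Jn (Lf u) (Jn l r), Jn (Jn l r) (Lf u)}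
     \<union> {Jn l' r | l'. l' \<in> inserts u l} \<union> {Jn l r' | r'. r' \<in> inserts u r}"

fun deletes :: "stree \<Rightarrow> stree set" where
  "deletes (Lf a) = {}"
| "deletes (Jn l r) = (case l of Lf _ \<Rightarrow> {r} | _ \<Rightarrow> {}) \<union> (case r of Lf _ \<Rightarrow> {l} | _ \<Rightarrow> {})
     \<union> {Jn l' r | l'. l' \<in> deletes l} \<union> {Jn l r' | r'. r' \<in> deletes r}"

text \<open>All possible results of one HVL-Prime application. On the empty tree,
  substitution and deletion have no leaf to act on and leave the tree unchanged.\<close>
definition mutations :: "nat \<Rightarrow> syntree \<Rightarrow> syntree set" where
  "mutations n X = (case X of
      None \<Rightarrow> {Some (Lf u) | u. u \<in> terminals n} \<union> {None}
    | Some t \<Rightarrow> {Some t' | t' u. u \<in> terminals n \<and> (t' \<in> substs u t \<or> t' \<in> inserts u t)}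
               \<union> Some ` deletes t
               \<union> (case t of Lf _ \<Rightarrow> {None} | _ \<Rightarrow> {}))"

definition weakly_dom :: "fitness_kind \<Rightarrow> (nat \<Rightarrow> real) \<Rightarrow> syntree \<Rightarrow> syntree \<Rightarrow> bool" where
  "weakly_dom k w Y X \<longleftrightarrow> fitness k w Y \<ge> fitness k w X \<and> complexity Y \<le> complexity X"

definition strictly_dom :: "fitness_kind \<Rightarrow> (nat \<Rightarrow> real) \<Rightarrow> syntree \<Rightarrow> syntree \<Rightarrow> bool" where
  "strictly_dom k w Y X \<longleftrightarrow> weakly_dom k w Y X \<and>
     (fitness k w Y > fitness k w X \<or> complexity Y < complexity X)"

definition smo_step :: "fitness_kind \<Rightarrow> nat \<Rightarrow> (nat \<Rightarrow> real) \<Rightarrow> syntree set \<Rightarrow> syntree set \<Rightarrow> bool" where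
  "smo_step k n w P P' \<longleftrightarrow> (\<exists>X\<in>P. \<exists>Y\<in>mutations n X.
      P' = (if \<exists>Z\<in>P. strictly_dom k w Z Y then P
            else (P - {Z\<in>P. weakly_dom k w Y Z}) \<union> {Y}))"

text \<open>Populations reachable (with positive probability) by SMO-GP-single from X0.\<close>
inductive smo_reachable :: "fitness_kind \<Rightarrow> nat \<Rightarrow> (nat \<Rightarrow> real) \<Rightarrow> syntree \<Rightarrow> syntree set \<Rightarrow> bool"
  for k n w X0 where
  init: "smo_reachable k n w X0 {X0}"
| step: "smo_reachable k n w X0 P \<Longrightarrow> smo_step k n w P P' \<Longrightarrow> smo_reachable k n w X0 P'"

end

theory Submission
  imports Defs
begin

(*
  Everything relevant about a syntax tree is its leaf list: the complexity of a
  tree with m leaves is 2m - 1 (0 for the empty tree), and each mutation edits the leaf list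
  at one position (insert, substitute or delete a literal).  For both WORDER and WMAJORITY a
  tree is non-redundant iff its leaf list consists of pairwise distinct positive literals;
  the expressed variables are then exactly the variables of the leaves.

  Consequently a mutation of a non-redundant tree X is either non-redundant again, or it
  carries no new positive variable while being at least as large as X; in the latter case X
  strictly dominates it (weights are positive), so SMO-GP-single rejects it.  Hence the
  population stays non-redundant, and since it never holds two trees of equal complexity,
  and the complexity 2m - 1 of a non-redundant tree is fixed by its number m <= n of
  expressed variables, it has at most n + 1 members.
*)

text \<open>Complexity is determined by the number of leaves; truncated subtraction covers the
  empty tree.\<close>

lemma size_st_leaves: "size_st t + 1 = 2 * length (leaves_st t)"
  by (induct t) auto

lemma complexity_leaves: "complexity X = 2 * length (leaves X) - 1"
proof (cases X)
  case (Some t)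
  then show ?thesis using size_st_leaves[of t] by (simp add: complexity_def leaves_def)
qed (simp add: complexity_def leaves_def)

lemma substs_leaves:
  "t' \<in> substs u t \<Longrightarrow> \<exists>xs a ys. leaves_st t = xs @ a # ys \<and> leaves_st t' = xs @ u # ys"
proof (induct t arbitrary: t')
  case (Lf b) then show ?case by (intro exI[of _ "[]"]) simp
next
  case (Jn l r)
  then consider (left) l' where "t' = Jn l' r" "l' \<in> substs u l"
    | (right) r' where "t' = Jn l r'" "r' \<in> substs u r" by auto
  then show ?case
  proof cases
    case left
    with Jn.hyps(1) obtain xs a ys
      where "leaves_st l = xs @ a # ys" "leaves_st l' = xs @ u # ys" by blast
    with left show ?thesis by (intro exI[of _ xs] exI[of _ a] exI[of _ "ys @ leaves_st r"]) simp
  next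
    case right
    with Jn.hyps(2) obtain xs a ys
      where "leaves_st r = xs @ a # ys" "leaves_st r' = xs @ u # ys" by blast
    with right show ?thesis by (intro exI[of _ "leaves_st l @ xs"] exI[of _ a] exI[of _ ys]) simp
  qed
qed

lemma inserts_leaves:
  "t' \<in> inserts u t \<Longrightarrow> \<exists>xs ys. leaves_st t = xs @ ys \<and> leaves_st t' = xs @ u # ys"
proof (induct t arbitrary: t')
  case (Lf b)
  then have "t' = Jn (Lf u) (Lf b) \<or> t' = Jn (Lf b) (Lf u)" by simp
  then show ?case by (auto intro: exI[of _ "[]"] exI[of _ "[b]"])
next
  case (Jn l r)
  then consider (new_left) "t' = Jn (Lf u) (Jn l r)" | (new_right) "t' = Jn (Jn l r) (Lf u)"
    | (left) l' where "t' = Jn l' r" "l' \<in> inserts u l"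
    | (right) r' where "t' = Jn l r'" "r' \<in> inserts u r" by auto
  then show ?case
  proof cases
    case new_left then show ?thesis by (intro exI[of _ "[]"] exI[of _ "leaves_st (Jn l r)"]) simp
  next
    case new_right then show ?thesis by (intro exI[of _ "leaves_st (Jn l r)"] exI[of _ "[]"]) simp
  next
    case left
    with Jn.hyps(1) obtain xs ys where "leaves_st l = xs @ ys" "leaves_st l' = xs @ u # ys"
      by blast
    with left show ?thesis by (intro exI[of _ xs] exI[of _ "ys @ leaves_st r"]) simp
  next
    case right
    with Jn.hyps(2) obtain xs ys where "leaves_st r = xs @ ys" "leaves_st r' = xs @ u # ys"
      by blast
    with right show ?thesis by (intro exI[of _ "leaves_st l @ xs"] exI[of _ ys]) simp
  qed
qed

lemma deletes_leaves:
  "t' \<in> deletes t \<Longrightarrow> \<exists>xs a ys. leaves_st t = xs @ a # ys \<and> leaves_st t' = xs @ ys"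
proof (induct t arbitrary: t')
  case (Lf b) then show ?case by simp
next
  case (Jn l r)
  then consider (left_leaf) a where "l = Lf a" "t' = r" | (right_leaf) a where "r = Lf a" "t' = l"
    | (left) l' where "t' = Jn l' r" "l' \<in> deletes l"
    | (right) r' where "t' = Jn l r'" "r' \<in> deletes r"
    by (cases l; cases r) auto
  then show ?case
  proof cases
    case left_leaf
    then show ?thesis by (intro exI[of _ "[]"] exI[of _ a] exI[of _ "leaves_st r"]) simp
  next
    case right_leaf
    then show ?thesis by (intro exI[of _ "leaves_st l"] exI[of _ a] exI[of _ "[]"]) simp
  next
    case left
    with Jn.hyps(1) obtain xs a ys where "leaves_st l = xs @ a # ys" "leaves_st l' = xs @ ys"
      by blast
    with left show ?thesis by (intro exI[of _ xs] exI[of _ a] exI[of _ "ys @ leaves_st r"]) simp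
  next
    case right
    with Jn.hyps(2) obtain xs a ys where "leaves_st r = xs @ a # ys" "leaves_st r' = xs @ ys"
      by blast
    with right show ?thesis by (intro exI[of _ "leaves_st l @ xs"] exI[of _ a] exI[of _ ys]) simp
  qed
qed

lemma mutation_leaves:
  assumes "Y \<in> mutations n X"
  obtains (unchanged) "Y = X"
  | (insertion) xs ys u where "leaves X = xs @ ys" "leaves Y = xs @ u # ys" "u \<in> terminals n"
  | (substitution) xs a ys u
      where "leaves X = xs @ a # ys" "leaves Y = xs @ u # ys" "u \<in> terminals n"
  | (deletion) xs a ys where "leaves X = xs @ a # ys" "leaves Y = xs @ ys"
proof (cases X)
  case None
  with assms consider "Y = None" | u where "u \<in> terminals n" "Y = Some (Lf u)"
    by (auto simp: mutations_def)
  then show ?thesis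
  proof cases
    case 1 then show ?thesis using None unchanged by blast
  next
    case 2 then show ?thesis using None insertion[of "[]" "[]" u] by (simp add: leaves_def)
  qed
next
  case (Some t)
  have "Y \<in> {Some t' | t' u. u \<in> terminals n \<and> (t' \<in> substs u t \<or> t' \<in> inserts u t)}
      \<union> Some ` deletes t \<union> (case t of Lf _ \<Rightarrow> {None} | _ \<Rightarrow> {})"
    using assms Some by (simp add: mutations_def)
  then consider
      (s) t' u where "Y = Some t'" "u \<in> terminals n" "t' \<in> substs u t"
    | (i) t' u where "Y = Some t'" "u \<in> terminals n" "t' \<in> inserts u t"
    | (d) t' where "Y = Some t'" "t' \<in> deletes t"
    | (leaf) a where "t = Lf a" "Y = None"
    by (cases t) auto
  then show ?thesis
  proof cases
    case s
    with substs_leaves obtain xs a ys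
      where "leaves_st t = xs @ a # ys" "leaves_st t' = xs @ u # ys" by blast
    then show ?thesis using s Some by (intro substitution) (simp_all add: leaves_def)
  next
    case i
    with inserts_leaves obtain xs ys
      where "leaves_st t = xs @ ys" "leaves_st t' = xs @ u # ys" by blast
    then show ?thesis using i Some by (intro insertion) (simp_all add: leaves_def)
  next
    case d
    with deletes_leaves obtain xs a ys
      where "leaves_st t = xs @ a # ys" "leaves_st t' = xs @ ys" by blast
    then show ?thesis using d Some by (intro deletion) (simp_all add: leaves_def)
  next
    case leaf then show ?thesis using Some deletion[of "[]" a "[]"] by (simp add: leaves_def)
  qed
qed

definition pos_vars :: "lit list \<Rightarrow> nat set" where
  "pos_vars l = {i. Pos i \<in> set l}"

definition positive_distinct :: "lit list \<Rightarrow> bool" where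
  "positive_distinct l \<longleftrightarrow> distinct l \<and> set l \<subseteq> range Pos"

lemma finite_pos_vars: "finite (pos_vars l)"
  using finite_vimageI[of "set l" Pos] by (simp add: pos_vars_def vimage_def inj_def)

lemma card_pos_vars: "card (pos_vars l) = card (set l \<inter> range Pos)"
proof -
  have "card (Pos ` pos_vars l) = card (pos_vars l)" by (rule card_image) (simp add: inj_on_def)
  moreover have "Pos ` pos_vars l = set l \<inter> range Pos" by (auto simp: pos_vars_def)
  ultimately show ?thesis by simp
qed

lemma card_pos_vars_le: "card (pos_vars l) \<le> length l"
  using card_mono[of "set l" "set l \<inter> range Pos"] card_length[of l]
  by (simp add: card_pos_vars)

lemma card_pos_vars_eq_length: "card (pos_vars l) = length l \<longleftrightarrow> positive_distinct l"
proof
  assume eq: "card (pos_vars l) = length l"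
  have le: "card (set l \<inter> range Pos) \<le> card (set l)" by (rule card_mono) auto
  with eq card_length[of l] have "card (set l) = length l" by (simp add: card_pos_vars)
  moreover have "set l \<inter> range Pos = set l"
    using card_subset_eq[of "set l" "set l \<inter> range Pos"] le eq \<open>card (set l) = length l\<close>
    by (simp add: card_pos_vars)
  ultimately show "positive_distinct l"
    by (auto simp: positive_distinct_def card_distinct)
next
  assume "positive_distinct l"
  then show "card (pos_vars l) = length l"
    by (simp add: positive_distinct_def card_pos_vars Int_absorb2 distinct_card)
qed

lemma positive_distinct_vars:
  assumes "positive_distinct l" shows "distinct (map var l)"
proof -
  have "inj_on var (range Pos)" by (auto simp: inj_on_def)
  with assms show ?thesis by (auto simp: positive_distinct_def distinct_map intro: inj_on_subset)
qed

lemma positive_distinct_delete: "positive_distinct (xs @ a # ys) \<Longrightarrow> positive_distinct (xs @ ys)"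
  by (auto simp: positive_distinct_def)

text \<open>Inserting or substituting a literal that breaks distinct positivity contributes no new
  positive variable: it is a complement or a repeated variable.\<close>

lemma redundant_edit_pos_vars:
  assumes "positive_distinct (xs @ ys)" and "\<not> positive_distinct (xs @ u # ys)"
  shows "pos_vars (xs @ u # ys) = pos_vars (xs @ ys)"
  using assms by (cases u) (auto simp: positive_distinct_def pos_vars_def)

lemma worder_scan_subset: "set (worder_scan S l) \<subseteq> set S \<union> set l"
  by (induct S l rule: worder_scan.induct) auto

lemma worder_scan_distinct_vars: "distinct (map var (S @ l)) \<Longrightarrow> worder_scan S l = S @ l"
  by (induct l arbitrary: S) auto

lemma count_list_distinct: "distinct xs \<Longrightarrow> count_list xs x = (if x \<in> set xs then 1 else 0)"
  by (induct xs) auto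

lemma expressed_subset_pos_vars: "expressed k X \<subseteq> pos_vars (leaves X)"
proof (cases k)
  case WORDER
  then show ?thesis using worder_scan_subset[of "[]" "leaves X"]
    by (auto simp: expressed_def pos_vars_def)
next
  case WMAJORITY
  have "Pos i \<in> set (leaves X)" if "1 \<le> count_list (leaves X) (Pos i)" for i
    using that count_list_0_iff[of "leaves X" "Pos i"] by auto
  with WMAJORITY show ?thesis by (auto simp: expressed_def pos_vars_def)
qed

lemma expressed_positive_distinct:
  assumes "positive_distinct (leaves X)"
  shows "expressed k X = pos_vars (leaves X)"
proof (cases k)
  case WORDER
  then show ?thesis using worder_scan_distinct_vars[of "[]"] positive_distinct_vars[OF assms]
    by (simp add: expressed_def pos_vars_def)
next
  case WMAJORITY
  have "Neg i \<notin> set (leaves X)" for i using assms by (auto simp: positive_distinct_def)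
  then have no_neg: "count_list (leaves X) (Neg i) = 0" for i by (simp add: count_list_0_iff)
  have "distinct (leaves X)" using assms by (simp add: positive_distinct_def)
  then have "count_list (leaves X) (Pos i) = (if Pos i \<in> set (leaves X) then 1 else 0)" for i
    by (rule count_list_distinct)
  with no_neg WMAJORITY show ?thesis by (auto simp: expressed_def pos_vars_def)
qed

lemma non_redundant_iff: "non_redundant k X \<longleftrightarrow> positive_distinct (leaves X)"
proof (cases X)
  case None
  then show ?thesis by (simp add: non_redundant_def leaves_def positive_distinct_def)
next
  case (Some t)
  let ?l = "leaves X"
  have "?l \<noteq> []" using Some by (induct t arbitrary: X) (auto simp: leaves_def)
  then obtain m where "length ?l = Suc m" by (cases ?l) auto
  then have "int (complexity X) = 2 * int (length ?l) - 1" by (simp add: complexity_leaves)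
  then have "non_redundant k X \<longleftrightarrow> card (expressed k X) = length ?l"
    using Some by (auto simp: non_redundant_def)
  also have "\<dots> \<longleftrightarrow> positive_distinct ?l"
  proof
    assume eq: "card (expressed k X) = length ?l"
    have "card (expressed k X) \<le> card (pos_vars ?l)"
      by (rule card_mono[OF finite_pos_vars expressed_subset_pos_vars])
    with eq card_pos_vars_le[of ?l] show "positive_distinct ?l"
      by (simp add: card_pos_vars_eq_length[symmetric])
  next
    assume "positive_distinct ?l"
    then show "card (expressed k X) = length ?l"
      by (simp add: expressed_positive_distinct card_pos_vars_eq_length)
  qed
  finally show ?thesis .
qed

lemma pos_vars_over_T: "over_T n X \<Longrightarrow> pos_vars (leaves X) \<subseteq> {1..n}"
  by (auto simp: over_T_def pos_vars_def terminals_def)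

lemma strictly_dom_by_pos_vars:
  assumes nr: "non_redundant k X"
    and wpos: "\<forall>i\<in>pos_vars (leaves X). 0 < w i"
    and vars: "pos_vars (leaves Y) \<subseteq> pos_vars (leaves X)"
    and len: "length (leaves X) \<le> length (leaves Y)"
    and strict: "pos_vars (leaves Y) \<noteq> pos_vars (leaves X) \<or> length (leaves X) < length (leaves Y)"
  shows "strictly_dom k w X Y"
proof -
  have fit_X: "fitness k w X = sum w (pos_vars (leaves X))"
    using nr by (simp add: fitness_def non_redundant_iff expressed_positive_distinct)
  have "fitness k w Y \<le> sum w (pos_vars (leaves Y))"
    unfolding fitness_def using vars wpos
    by (intro sum_mono2[OF finite_pos_vars expressed_subset_pos_vars]) force
  also have "\<dots> \<le> sum w (pos_vars (leaves X))"
    using vars wpos by (intro sum_mono2[OF finite_pos_vars]) auto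
  finally have fit_le: "fitness k w Y \<le> fitness k w X" by (simp add: fit_X)
  have "fitness k w Y < fitness k w X" if missing: "pos_vars (leaves Y) \<noteq> pos_vars (leaves X)"
  proof -
    obtain i where "i \<in> pos_vars (leaves X) - pos_vars (leaves Y)" using missing vars by blast
    then have "sum w (pos_vars (leaves Y)) < sum w (pos_vars (leaves X))"
      using vars wpos by (intro sum_strict_mono2[OF finite_pos_vars]) auto
    then show ?thesis
      using \<open>fitness k w Y \<le> sum w (pos_vars (leaves Y))\<close> by (simp add: fit_X)
  qed
  moreover have "complexity X \<le> complexity Y" "length (leaves X) < length (leaves Y) \<Longrightarrow>
      complexity X < complexity Y"
    using len by (auto simp: complexity_leaves)
  ultimately show ?thesis
    using fit_le strict by (auto simp: strictly_dom_def weakly_dom_def)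
qed

lemma mutation_over_T: "over_T n X \<Longrightarrow> Y \<in> mutations n X \<Longrightarrow> over_T n Y"
  by (erule mutation_leaves) (auto simp: over_T_def)

lemma mutation_non_redundant_or_dominated:
  assumes wpos: "\<forall>i. 1 \<le> i \<and> i \<le> n \<longrightarrow> w i > 0"
    and ov: "over_T n X" and nr: "non_redundant k X" and Y: "Y \<in> mutations n X"
  shows "non_redundant k Y \<or> strictly_dom k w X Y"
proof -
  have pd: "positive_distinct (leaves X)" using nr by (simp add: non_redundant_iff)
  have wX: "\<forall>i\<in>pos_vars (leaves X). 0 < w i" using pos_vars_over_T[OF ov] wpos by auto
  from Y show ?thesis
  proof (cases rule: mutation_leaves)
    case unchanged then show ?thesis using nr by simp
  next
    case (deletion xs a ys)
    then show ?thesis using pd positive_distinct_delete by (simp add: non_redundant_iff)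
  next
    case (insertion xs ys u)
    show ?thesis
    proof (cases "positive_distinct (leaves Y)")
      case False
      then have "pos_vars (leaves Y) = pos_vars (leaves X)"
        using insertion pd redundant_edit_pos_vars by simp
      then show ?thesis
        using insertion by (intro disjI2) (rule strictly_dom_by_pos_vars[OF nr wX], simp_all)
    qed (simp add: non_redundant_iff)
  next
    case (substitution xs a ys u)
    show ?thesis
    proof (cases "positive_distinct (leaves Y)")
      case False
      have "positive_distinct (xs @ ys)" using pd substitution positive_distinct_delete by simp
      then have Y_vars: "pos_vars (leaves Y) = pos_vars (xs @ ys)"
        using False substitution redundant_edit_pos_vars by simp
      obtain i where a: "a = Pos i" using pd substitution by (auto simp: positive_distinct_def)
      with pd substitution have "Pos i \<notin> set (xs @ ys)" by (simp add: positive_distinct_def)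
      then have "i \<in> pos_vars (leaves X) - pos_vars (leaves Y)"
        using substitution a Y_vars by (simp add: pos_vars_def)
      then have "pos_vars (leaves Y) \<noteq> pos_vars (leaves X)" by blast
      moreover have "pos_vars (leaves Y) \<subseteq> pos_vars (leaves X)"
        using substitution Y_vars by (auto simp: pos_vars_def)
      ultimately show ?thesis
        using substitution by (intro disjI2) (rule strictly_dom_by_pos_vars[OF nr wX], simp_all)
    qed (simp add: non_redundant_iff)
  qed
qed

definition consistent_population :: "fitness_kind \<Rightarrow> nat \<Rightarrow> syntree set \<Rightarrow> bool" where
  "consistent_population k n P \<longleftrightarrow>
     finite P \<and> (\<forall>X\<in>P. over_T n X \<and> non_redundant k X) \<and> inj_on complexity P"

lemma smo_step_consistent:
  assumes wpos: "\<forall>i. 1 \<le> i \<and> i \<le> n \<longrightarrow> w i > 0"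
    and P: "consistent_population k n P" and step: "smo_step k n w P P'"
  shows "consistent_population k n P'"
proof -
  obtain X Y where X: "X \<in> P" and Y: "Y \<in> mutations n X" and
    P': "P' = (if \<exists>Z\<in>P. strictly_dom k w Z Y then P
               else (P - {Z\<in>P. weakly_dom k w Y Z}) \<union> {Y})"
    using step unfolding smo_step_def by blast
  show ?thesis
  proof (cases "\<exists>Z\<in>P. strictly_dom k w Z Y")
    case False
    let ?Q = "P - {Z\<in>P. weakly_dom k w Y Z}"
    have X_ok: "over_T n X" "non_redundant k X" using P X by (auto simp: consistent_population_def)
    have "over_T n Y" using mutation_over_T[OF X_ok(1) Y] .
    moreover have "non_redundant k Y"
      using mutation_non_redundant_or_dominated[OF wpos X_ok Y] False X by blast
    moreover have "complexity Y \<notin> complexity ` ?Q"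
    proof
      assume "complexity Y \<in> complexity ` ?Q"
      then obtain Z where "complexity Y = complexity Z" "Z \<in> ?Q" by (rule imageE)
      then have "Z \<in> P" "strictly_dom k w Z Y" by (auto simp: strictly_dom_def weakly_dom_def)
      with False show False by blast
    qed
    moreover have "inj_on complexity ?Q"
      using P by (simp add: consistent_population_def inj_on_diff)
    moreover have "P' = insert Y ?Q" using P' False by simp
    ultimately show ?thesis
      using P by (auto simp: consistent_population_def)
  qed (use P P' in simp)
qed

lemma smo_reachable_consistent:
  assumes "\<forall>i. 1 \<le> i \<and> i \<le> n \<longrightarrow> w i > 0" and "over_T n X0" and "non_redundant k X0"
    and "smo_reachable k n w X0 P"
  shows "consistent_population k n P"
  using assms(4)
proof induct
  case init then show ?case using assms(2,3) by (simp add: consistent_population_def)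
next
  case (step P P') then show ?case using smo_step_consistent[OF assms(1)] by blast
qed

lemma non_redundant_leaves_le: "over_T n X \<Longrightarrow> non_redundant k X \<Longrightarrow> length (leaves X) \<le> n"
  using card_mono[OF _ pos_vars_over_T, of n X]
  by (simp add: non_redundant_iff card_pos_vars_eq_length[symmetric])

lemma consistent_population_card: "consistent_population k n P \<Longrightarrow> card P \<le> n + 1"
proof -
  assume P: "consistent_population k n P"
  let ?m = "\<lambda>X. length (leaves X)"
  have "inj_on ?m P"
    using P by (auto simp: consistent_population_def inj_on_def complexity_leaves)
  moreover have "?m ` P \<subseteq> {0..n}"
    using P non_redundant_leaves_le by (auto simp: consistent_population_def)
  ultimately have "card P \<le> card {0..n}" by (intro card_inj_on_le) auto
  then show ?thesis by simp
qed

theorem mainTheorem10: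
  fixes k :: fitness_kind and n :: nat and w :: "nat \<Rightarrow> real" and X0 :: syntree
    and P :: "syntree set"
  assumes "n \<ge> 1"
    and "\<forall>i j. 1 \<le> i \<and> i \<le> j \<and> j \<le> n \<longrightarrow> w j \<le> w i"
    and "\<forall>i. 1 \<le> i \<and> i \<le> n \<longrightarrow> w i > 0"
    and "over_T n X0"
    and "non_redundant k X0"
    and "smo_reachable k n w X0 P"
  shows "(\<forall>X\<in>P. non_redundant k X) \<and> finite P \<and> card P \<le> n + 1"
proof -
  have "consistent_population k n P"
    using smo_reachable_consistent[OF assms(3-6)] .
  then show ?thesis
    using consistent_population_card unfolding consistent_population_def by blast
qed

end
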